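(* Let $B$ be an augmented bisimplicial groupoid with a left augmented abacus map $f$, and let $\tilde B$ be obtained from $B$ by replacing, for $i,j\ge0$, each top vertical face map $e_{i+1}:B_{i+1,j}\to B_{i,j}$ by $\tilde e_{i+1}:=d_0\circ f_{i,j}$ (keeping all other structure maps, the augmentation column $B_{\bullet,-1}$ and the augmentation maps). Then the augmentation map $u:\tilde B_{\bullet,0}\to B_{\bullet,-1}$ is a simplicial map.
   Context: An augmented bisimplicial groupoid is a functor $(\Delta_+^{\mathrm{op}}\times\Delta_+^{\mathrm{op}})\setminus\{(-1,-1)\}\to\mathbf{Grpd}$, $\Delta_+$ the augmented simplex category; it consists of a bisimplicial groupoid $(B_{i,j})_{i,j\ge0}$ together with a simplicial groupoid $B_{\bullet,-1}$ (vertical maps $e_k,t_k$), a simplicial groupoid $B_{-1,\bullet}$ (horizontal maps $d_k,s_k$) and augmentation maps $u:B_{i,0}\to B_{i,-1}$ and $v:B_{0,j}\to B_{-1,j}$ (with $u d_0=u d_1$ on $B_{i,1}$, and compatibly with the other structure). Horizontal maps: $d_k:B_{i,j}\to B_{i,j-1}$, $s_k$; vertical maps: $e_k:B_{i,j}\to B_{i-1,j}$, $t_k$; on $B_{i,j}$, $e_\top=e_i$, $t_\top=t_i$, $d_\bot=d_0$. An abacus map is a family $f_{i,j}:B_{i+1,j}\to B_{i,j+1}$ ($i,j\ge0$) such that each $f_{i,\bullet}:B_{i+1,\bullet}\to\mathrm{Dec}_\bot(B_{i,\bullet})$ is simplicial (where $\mathrm{Dec}_\bot$ shifts down by one and deletes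 $d_0,s_0$), each $f_{\bullet,j}:\mathrm{Dec}_\top(B_{\bullet,j})\to B_{\bullet,j+1}$ commutes with all structure maps except top face maps (where $\mathrm{Dec}_\top$ shifts down by one and deletes last face and degeneracy maps), and $d_\bot f_{i,j}t_\top=\mathrm{id}$. It is left augmented if there are maps $f_{i,-1}:B_{i+1,-1}\to B_{i,0}$ ($i\ge0$) with $f_{i,-1}\circ u=d_1\circ f_{i,0}$ as maps $B_{i+1,0}\to B_{i,0}$, and $u\circ f_{i,-1}=e_{\top}$ as maps $B_{i+1,-1}\to B_{i,-1}$. *)

theory Defs
  imports Main
begin

section \<open>Groupoids (single-sorted: objects are identity arrows)\<close>

record 'a groupoid =
  Arr  :: "'a set"
  Dom  :: "'a \<Rightarrow> 'a"
  Cod  :: "'a \<Rightarrow> 'a"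
  Comp :: "'a \<Rightarrow> 'a \<Rightarrow> 'a"   (* Comp g f = g after f, defined when Cod f = Dom g *)

definition is_groupoid :: "'a groupoid \<Rightarrow> bool" where
  "is_groupoid G \<longleftrightarrow>
     (\<forall>f\<in>Arr G. Dom G f \<in> Arr G \<and> Cod G f \<in> Arr G
        \<and> Dom G (Dom G f) = Dom G f \<and> Cod G (Dom G f) = Dom G f
        \<and> Dom G (Cod G f) = Cod G f \<and> Cod G (Cod G f) = Cod G f
        \<and> Comp G f (Dom G f) = f \<and> Comp G (Cod G f) f = f) \<and>
     (\<forall>f\<in>Arr G. \<forall>g\<in>Arr G. Cod G f = Dom G g \<longrightarrow>
        Comp G g f \<in> Arr G \<and> Dom G (Comp G g f) = Dom G f \<and> Cod G (Comp G g f) = Cod G g) \<and>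
     (\<forall>f\<in>Arr G. \<forall>g\<in>Arr G. \<forall>h\<in>Arr G. Cod G f = Dom G g \<longrightarrow> Cod G g = Dom G h \<longrightarrow>
        Comp G h (Comp G g f) = Comp G (Comp G h g) f) \<and>
     (\<forall>f\<in>Arr G. \<exists>g\<in>Arr G. Dom G g = Cod G f \<and> Cod G g = Dom G f
        \<and> Comp G g f = Dom G f \<and> Comp G f g = Cod G f)"

definition is_functor :: "'a groupoid \<Rightarrow> 'a groupoid \<Rightarrow> ('a \<Rightarrow> 'a) \<Rightarrow> bool" where
  "is_functor G H F \<longleftrightarrow>
     (\<forall>f\<in>Arr G. F f \<in> Arr H \<and> F (Dom G f) = Dom H (F f) \<and> F (Cod G f) = Cod H (F f)) \<and>
     (\<forall>f\<in>Arr G. \<forall>g\<in>Arr G. Cod G f = Dom G g \<longrightarrow> F (Comp G g f) = Comp H (F g) (F f))"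

definition eq_on :: "'a groupoid \<Rightarrow> ('a \<Rightarrow> 'a) \<Rightarrow> ('a \<Rightarrow> 'a) \<Rightarrow> bool" where
  "eq_on G F F' \<longleftrightarrow> (\<forall>x\<in>Arr G. F x = F' x)"

text \<open>A simplicial groupoid with levels n >= lo (lo = 0: ordinary, lo = -1: augmented).
  X n is the groupoid in level n; d n k : X n -> X (n-1) is the face map d_k (for n > lo, k <= n),
  s n k : X n -> X (n+1) the degeneracy s_k (for n >= 0, k <= n).  In the augmented case the
  unique face map X 0 -> X (-1) is d 0 0.\<close>
definition simp_obj ::
  "int \<Rightarrow> (int \<Rightarrow> 'a groupoid) \<Rightarrow> (int \<Rightarrow> nat \<Rightarrow> 'a \<Rightarrow> 'a) \<Rightarrow> (int \<Rightarrow> nat \<Rightarrow> 'a \<Rightarrow> 'a) \<Rightarrow> bool" where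
  "simp_obj lo X d s \<longleftrightarrow>
     (\<forall>n. lo \<le> n \<longrightarrow> is_groupoid (X n)) \<and>
     (\<forall>n k. lo < n \<and> int k \<le> n \<longrightarrow> is_functor (X n) (X (n - 1)) (d n k)) \<and>
     (\<forall>n k. 0 \<le> n \<and> int k \<le> n \<longrightarrow> is_functor (X n) (X (n + 1)) (s n k)) \<and>
     (\<forall>n i j. lo < n - 1 \<and> i < j \<and> int j \<le> n \<longrightarrow>
        eq_on (X n) (d (n - 1) i \<circ> d n j) (d (n - 1) (j - 1) \<circ> d n i)) \<and>
     (\<forall>n i j. 0 \<le> n \<and> i < j \<and> int j \<le> n \<longrightarrow>
        eq_on (X n) (d (n + 1) i \<circ> s n j) (s (n - 1) (j - 1) \<circ> d n i)) \<and>
     (\<forall>n j. 0 \<le> n \<and> int j \<le> n \<longrightarrow>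
        eq_on (X n) (d (n + 1) j \<circ> s n j) id \<and> eq_on (X n) (d (n + 1) (j + 1) \<circ> s n j) id) \<and>
     (\<forall>n i j. 0 \<le> n \<and> j + 1 < i \<and> int i \<le> n + 1 \<longrightarrow>
        eq_on (X n) (d (n + 1) i \<circ> s n j) (s (n - 1) j \<circ> d n (i - 1))) \<and>
     (\<forall>n i j. 0 \<le> n \<and> i \<le> j \<and> int j \<le> n \<longrightarrow>
        eq_on (X n) (s (n + 1) i \<circ> s n j) (s (n + 1) (j + 1) \<circ> s n i))"

text \<open>B i j is the groupoid B_{i,j} for i, j >= -1, (i,j) \<noteq> (-1,-1).
  Horizontal maps: d i j k : B_{i,j} -> B_{i,j-1}, s i j k : B_{i,j} -> B_{i,j+1}.
  Vertical maps:   e i j k : B_{i,j} -> B_{i-1,j}, t i j k : B_{i,j} -> B_{i+1,j}.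
  The augmentation maps are u = d i 0 0 : B_{i,0} -> B_{i,-1} (i >= 0) and
  v = e 0 j 0 : B_{0,j} -> B_{-1,j} (j >= 0).\<close>
definition aug_bisimplicial ::
  "(int \<Rightarrow> int \<Rightarrow> 'a groupoid) \<Rightarrow> (int \<Rightarrow> int \<Rightarrow> nat \<Rightarrow> 'a \<Rightarrow> 'a) \<Rightarrow> (int \<Rightarrow> int \<Rightarrow> nat \<Rightarrow> 'a \<Rightarrow> 'a)
   \<Rightarrow> (int \<Rightarrow> int \<Rightarrow> nat \<Rightarrow> 'a \<Rightarrow> 'a) \<Rightarrow> (int \<Rightarrow> int \<Rightarrow> nat \<Rightarrow> 'a \<Rightarrow> 'a) \<Rightarrow> bool" where
  "aug_bisimplicial B d s e t \<longleftrightarrow>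
     (\<forall>i. 0 \<le> i \<longrightarrow> simp_obj (-1) (\<lambda>j. B i j) (d i) (s i)) \<and>
     simp_obj 0 (\<lambda>j. B (-1) j) (d (-1)) (s (-1)) \<and>
     (\<forall>j. 0 \<le> j \<longrightarrow> simp_obj (-1) (\<lambda>i. B i j) (\<lambda>i. e i j) (\<lambda>i. t i j)) \<and>
     simp_obj 0 (\<lambda>i. B i (-1)) (\<lambda>i. e i (-1)) (\<lambda>i. t i (-1)) \<and>
     (\<forall>i j k l. 0 \<le> i \<and> 0 \<le> j \<and> \<not> (i = 0 \<and> j = 0) \<and> int k \<le> j \<and> int l \<le> i \<longrightarrow>
        eq_on (B i j) (d (i - 1) j k \<circ> e i j l) (e i (j - 1) l \<circ> d i j k)) \<and>
     (\<forall>i j k l. 0 \<le> i \<and> 0 \<le> j \<and> int k \<le> j \<and> int l \<le> i \<longrightarrow>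
        eq_on (B i j) (d (i + 1) j k \<circ> t i j l) (t i (j - 1) l \<circ> d i j k)) \<and>
     (\<forall>i j k l. 0 \<le> i \<and> 0 \<le> j \<and> int k \<le> j \<and> int l \<le> i \<longrightarrow>
        eq_on (B i j) (e i (j + 1) l \<circ> s i j k) (s (i - 1) j k \<circ> e i j l)) \<and>
     (\<forall>i j k l. 0 \<le> i \<and> 0 \<le> j \<and> int k \<le> j \<and> int l \<le> i \<longrightarrow>
        eq_on (B i j) (t i (j + 1) l \<circ> s i j k) (s (i + 1) j k \<circ> t i j l))"

definition abacus_map ::
  "(int \<Rightarrow> int \<Rightarrow> 'a groupoid) \<Rightarrow> (int \<Rightarrow> int \<Rightarrow> nat \<Rightarrow> 'a \<Rightarrow> 'a) \<Rightarrow> (int \<Rightarrow> int \<Rightarrow> nat \<Rightarrow> 'a \<Rightarrow> 'a)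
   \<Rightarrow> (int \<Rightarrow> int \<Rightarrow> nat \<Rightarrow> 'a \<Rightarrow> 'a) \<Rightarrow> (int \<Rightarrow> int \<Rightarrow> nat \<Rightarrow> 'a \<Rightarrow> 'a) \<Rightarrow> (int \<Rightarrow> int \<Rightarrow> 'a \<Rightarrow> 'a) \<Rightarrow> bool" where
  "abacus_map B d s e t f \<longleftrightarrow>
     (\<forall>i j. 0 \<le> i \<and> 0 \<le> j \<longrightarrow> is_functor (B (i + 1) j) (B i (j + 1)) (f i j)) \<and>
     \<comment> \<open>f_{i,\<bullet>} : B_{i+1,\<bullet>} -> Dec_bot(B_{i,\<bullet>}) is simplicial\<close>
     (\<forall>i j k. 0 \<le> i \<and> 1 \<le> j \<and> int k \<le> j \<longrightarrow>
        eq_on (B (i + 1) j) (f i (j - 1) \<circ> d (i + 1) j k) (d i (j + 1) (k + 1) \<circ> f i j)) \<and>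
     (\<forall>i j k. 0 \<le> i \<and> 0 \<le> j \<and> int k \<le> j \<longrightarrow>
        eq_on (B (i + 1) j) (f i (j + 1) \<circ> s (i + 1) j k) (s i (j + 1) (k + 1) \<circ> f i j)) \<and>
     \<comment> \<open>f_{\<bullet>,j} : Dec_top(B_{\<bullet>,j}) -> B_{\<bullet>,j+1} commutes with all but the top face maps\<close>
     (\<forall>i j k. 1 \<le> i \<and> 0 \<le> j \<and> int k < i \<longrightarrow>
        eq_on (B (i + 1) j) (f (i - 1) j \<circ> e (i + 1) j k) (e i (j + 1) k \<circ> f i j)) \<and>
     (\<forall>i j k. 0 \<le> i \<and> 0 \<le> j \<and> int k \<le> i \<longrightarrow>
        eq_on (B (i + 1) j) (f (i + 1) j \<circ> t (i + 1) j k) (t i (j + 1) k \<circ> f i j)) \<and>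
     \<comment> \<open>d_bot f_{i,j} t_top = id\<close>
     (\<forall>i j. 0 \<le> i \<and> 0 \<le> j \<longrightarrow>
        eq_on (B i j) (d i (j + 1) 0 \<circ> f i j \<circ> t i j (nat i)) id)"

definition left_augmented ::
  "(int \<Rightarrow> int \<Rightarrow> 'a groupoid) \<Rightarrow> (int \<Rightarrow> int \<Rightarrow> nat \<Rightarrow> 'a \<Rightarrow> 'a)
   \<Rightarrow> (int \<Rightarrow> int \<Rightarrow> nat \<Rightarrow> 'a \<Rightarrow> 'a) \<Rightarrow> (int \<Rightarrow> int \<Rightarrow> 'a \<Rightarrow> 'a) \<Rightarrow> bool" where
  "left_augmented B d e f \<longleftrightarrow>
     (\<forall>i. 0 \<le> i \<longrightarrow> is_functor (B (i + 1) (-1)) (B i 0) (f i (-1))) \<and>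
     (\<forall>i. 0 \<le> i \<longrightarrow> eq_on (B (i + 1) 0) (f i (-1) \<circ> d (i + 1) 0 0) (d i 1 1 \<circ> f i 0)) \<and>
     (\<forall>i. 0 \<le> i \<longrightarrow> eq_on (B (i + 1) (-1)) (d i 0 0 \<circ> f i (-1)) (e (i + 1) (-1) (nat (i + 1))))"

definition etilde ::
  "(int \<Rightarrow> int \<Rightarrow> nat \<Rightarrow> 'a \<Rightarrow> 'a) \<Rightarrow> (int \<Rightarrow> int \<Rightarrow> nat \<Rightarrow> 'a \<Rightarrow> 'a) \<Rightarrow> (int \<Rightarrow> int \<Rightarrow> 'a \<Rightarrow> 'a)
   \<Rightarrow> int \<Rightarrow> int \<Rightarrow> nat \<Rightarrow> 'a \<Rightarrow> 'a" where
  "etilde d e f i j k x =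
     (if 1 \<le> i \<and> 0 \<le> j \<and> int k = i then d (i - 1) (j + 1) 0 (f (i - 1) j x) else e i j k x)"

end

theory Submission
  imports Defs
begin

(* Away from the top face the maps of B~ are those of B, so there u commutes with them by the
   bisimplicial interchange laws. For the top face, u e~_i = d_0 d_0 f_{i-1,0} = d_0 d_1 f_{i-1,0}
   by the simplicial identity in row i-1; the left augmentation turns d_1 f_{i-1,0} into
   f_{i-1,-1} u and then d_0 f_{i-1,-1} into e_i. *)

lemma is_functor_arr: "is_functor G H F \<Longrightarrow> x \<in> Arr G \<Longrightarrow> F x \<in> Arr H"
  unfolding is_functor_def by blast

lemma eq_onD: "eq_on G F F' \<Longrightarrow> x \<in> Arr G \<Longrightarrow> F x = F' x"
  unfolding eq_on_def by blast

lemma simp_obj_face_functor: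
  assumes "simp_obj lo X d s" "lo < n" "int k \<le> n"
  shows "is_functor (X n) (X (n - 1)) (d n k)"
  using assms(1) unfolding simp_obj_def using assms(2-) by (elim conjE) simp

lemma simp_obj_face_face:
  assumes "simp_obj lo X d s" "lo < n - 1" "i < j" "int j \<le> n"
  shows "eq_on (X n) (d (n - 1) i \<circ> d n j) (d (n - 1) (j - 1) \<circ> d n i)"
  using assms(1) unfolding simp_obj_def using assms(2-) by (elim conjE) simp

lemma aug_bisimplicial_row:
  "aug_bisimplicial B d s e t \<Longrightarrow> 0 \<le> i \<Longrightarrow> simp_obj (-1) (\<lambda>j. B i j) (d i) (s i)"
  unfolding aug_bisimplicial_def by (elim conjE) simp

lemma aug_bisimplicial_augmentation_functor:
  assumes "aug_bisimplicial B d s e t" "0 \<le> i"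
  shows "is_functor (B i 0) (B i (-1)) (d i 0 0)"
  using simp_obj_face_functor[OF aug_bisimplicial_row[OF assms], of 0 0] by simp

lemma aug_bisimplicial_face_vertical_face:
  assumes "aug_bisimplicial B d s e t" "0 \<le> i" "0 \<le> j" "\<not> (i = 0 \<and> j = 0)"
    "int k \<le> j" "int l \<le> i"
  shows "eq_on (B i j) (d (i - 1) j k \<circ> e i j l) (e i (j - 1) l \<circ> d i j k)"
  using assms(1) unfolding aug_bisimplicial_def using assms(2-) by (elim conjE) simp

lemma aug_bisimplicial_face_vertical_degeneracy:
  assumes "aug_bisimplicial B d s e t" "0 \<le> i" "0 \<le> j" "int k \<le> j" "int l \<le> i"
  shows "eq_on (B i j) (d (i + 1) j k \<circ> t i j l) (t i (j - 1) l \<circ> d i j k)"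
  using assms(1) unfolding aug_bisimplicial_def using assms(2-) by (elim conjE) simp

lemma abacus_map_functor:
  "abacus_map B d s e t f \<Longrightarrow> 0 \<le> i \<Longrightarrow> 0 \<le> j \<Longrightarrow> is_functor (B (i + 1) j) (B i (j + 1)) (f i j)"
  unfolding abacus_map_def by (elim conjE) simp

lemma left_augmented_augmentation:
  "left_augmented B d e f \<Longrightarrow> 0 \<le> i \<Longrightarrow>
    eq_on (B (i + 1) 0) (f i (-1) \<circ> d (i + 1) 0 0) (d i 1 1 \<circ> f i 0)"
  unfolding left_augmented_def by (elim conjE) simp

lemma left_augmented_top_face:
  "left_augmented B d e f \<Longrightarrow> 0 \<le> i \<Longrightarrow>
    eq_on (B (i + 1) (-1)) (d i 0 0 \<circ> f i (-1)) (e (i + 1) (-1) (nat (i + 1)))"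
  unfolding left_augmented_def by (elim conjE) simp

lemma etilde_non_top: "int k \<noteq> i \<Longrightarrow> etilde d e f i j k = e i j k"
  by (simp add: etilde_def fun_eq_iff)

lemma etilde_top:
  "1 \<le> i \<Longrightarrow> 0 \<le> j \<Longrightarrow> etilde d e f i j (nat i) = d (i - 1) (j + 1) 0 \<circ> f (i - 1) j"
  by (simp add: etilde_def fun_eq_iff)

lemma augmentation_etilde_top_face:
  assumes B: "aug_bisimplicial B d s e t" and f: "abacus_map B d s e t f"
    and aug: "left_augmented B d e f" and "1 \<le> i"
  shows "eq_on (B i 0) (d (i - 1) 0 0 \<circ> etilde d e f i 0 (nat i)) (e i (-1) (nat i) \<circ> d i 0 0)"
  unfolding eq_on_def
proof
  fix x assume x: "x \<in> Arr (B i 0)"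
  define m where "m = i - 1"
  have m: "0 \<le> m" "i = m + 1" using \<open>1 \<le> i\<close> by (auto simp: m_def)
  have fx: "f m 0 x \<in> Arr (B m 1)"
    using is_functor_arr[OF abacus_map_functor[OF f m(1), of 0]] x m(2) by simp
  have ux: "d i 0 0 x \<in> Arr (B i (-1))"
    using is_functor_arr[OF aug_bisimplicial_augmentation_functor[OF B] x] \<open>1 \<le> i\<close> by simp
  have "(d (i - 1) 0 0 \<circ> etilde d e f i 0 (nat i)) x = d m 0 0 (d m 1 0 (f m 0 x))"
    using etilde_top[OF \<open>1 \<le> i\<close>, of 0 d e f] by (simp add: m_def)
  also have "\<dots> = d m 0 0 (d m 1 1 (f m 0 x))"
    using eq_onD[OF simp_obj_face_face[OF aug_bisimplicial_row[OF B m(1)], of 1 0 1] fx] by simp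
  also have "\<dots> = d m 0 0 (f m (-1) (d i 0 0 x))"
    using eq_onD[OF left_augmented_augmentation[OF aug m(1)]] x m(2) by simp
  also have "\<dots> = e i (-1) (nat i) (d i 0 0 x)"
    using eq_onD[OF left_augmented_top_face[OF aug m(1)]] ux m(2) by simp
  finally show "(d (i - 1) 0 0 \<circ> etilde d e f i 0 (nat i)) x = (e i (-1) (nat i) \<circ> d i 0 0) x"
    by simp
qed

theorem lemma2p3:
  fixes B :: "int \<Rightarrow> int \<Rightarrow> 'a groupoid"
    and d s e t :: "int \<Rightarrow> int \<Rightarrow> nat \<Rightarrow> 'a \<Rightarrow> 'a"
    and f :: "int \<Rightarrow> int \<Rightarrow> 'a \<Rightarrow> 'a"
  assumes "aug_bisimplicial B d s e t"
    and "abacus_map B d s e t f"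
    and "left_augmented B d e f"
  shows "(\<forall>i k. 1 \<le> i \<and> int k \<le> i \<longrightarrow>
            eq_on (B i 0) (d (i - 1) 0 0 \<circ> etilde d e f i 0 k) (e i (-1) k \<circ> d i 0 0)) \<and>
         (\<forall>i k. 0 \<le> i \<and> int k \<le> i \<longrightarrow>
            eq_on (B i 0) (d (i + 1) 0 0 \<circ> t i 0 k) (t i (-1) k \<circ> d i 0 0))"
proof (intro conjI allI impI)
  fix i :: int and k :: nat
  assume ik: "1 \<le> i \<and> int k \<le> i"
  show "eq_on (B i 0) (d (i - 1) 0 0 \<circ> etilde d e f i 0 k) (e i (-1) k \<circ> d i 0 0)"
  proof (cases "int k = i")
    case True
    then have "k = nat i" by simp
    then show ?thesis using augmentation_etilde_top_face[OF assms] ik by simp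
  next
    case False
    then show ?thesis
      using aug_bisimplicial_face_vertical_face[OF assms(1), of i 0 0 k] ik
      by (simp add: etilde_non_top)
  qed
next
  fix i :: int and k :: nat
  assume "0 \<le> i \<and> int k \<le> i"
  then show "eq_on (B i 0) (d (i + 1) 0 0 \<circ> t i 0 k) (t i (-1) k \<circ> d i 0 0)"
    using aug_bisimplicial_face_vertical_degeneracy[OF assms(1), of i 0 0 k] by simp
qed

end
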